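(* In the setting below, the 2-form $\Xi$ on $TM$ is closed if and only if it is identically zero.
   Context: $G$ acts freely and properly on the left on $Q$, $\pi:Q\to M=Q/G$ is the principal bundle, $\gamma$ a principal connection on $\pi$ with horizontal lift $u\mapsto u^h$ and curvature $\Omega^\gamma(u,v)=d\gamma(\mathbf h_\gamma u,\mathbf h_\gamma v)$, $g$ a $G$-invariant Riemannian metric on $Q$, $\tilde g_x(u,v)=g_q(u^h_q,v^h_q)$ the induced metric on $M$, $\tilde K_x(u,v,w)=g_q\big(u^h_q,(\Omega^\gamma(v^h_q,w^h_q))_Q(q)\big)$, and $B$ the $(1,2)$-tensor field on $M$ with $\tilde g(B(X,Y),Z)=\tilde K(X,Y,Z)$. $\Xi$ is the 2-form on $TM$ defined by $\Xi(Y,Z)(w)=\tilde g_{x}\big(B(w,T\tau_M Y_w),T\tau_M Z_w\big)$ for $w\in T_xM$, $Y,Z$ vector fields on $TM$, $\tau_M:TM\to M$ the projection (in coordinates $\Xi=\sum_{a<b}\dot q^eB^c_{ea}\tilde g_{bc}\,dq^a\wedge dq^b$). *)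

theory Defs
  imports "HOL-Analysis.Analysis"
begin

text \<open>A chart of M is an open set U of real^'n
(coordinates q); TU = U x real^'n with fibre coordinates v (= qdot).
Coordinates on TU are indexed by 'n + 'n: Inl a is q^a, Inr a is v^a.
A 2-form on TU is given by its (antisymmetric) coefficient matrix
w x I J, i.e. w = (1/2) sum_{I,J} w_{IJ} dx^I wedge dx^J.\<close>

definition coord_vec :: "('n::finite) + 'n \<Rightarrow> (real^'n) \<times> (real^'n)" where
  "coord_vec I = (case I of Inl a \<Rightarrow> (axis a 1, 0) | Inr a \<Rightarrow> (0, axis a 1))"

definition partial_coord ::
  "((real^'n) \<times> (real^'n) \<Rightarrow> real) \<Rightarrow> (real^'n) \<times> (real^'n) \<Rightarrow> ('n::finite) + 'n \<Rightarrow> real" where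
  "partial_coord f x I = deriv (\<lambda>t. f (x + t *\<^sub>R coord_vec I)) 0"

definition closed_2form ::
  "((real^'n) \<times> (real^'n)) set \<Rightarrow> ((real^'n) \<times> (real^'n) \<Rightarrow> ('n::finite) + 'n \<Rightarrow> 'n + 'n \<Rightarrow> real) \<Rightarrow> bool" where
  "closed_2form S w \<longleftrightarrow> (\<forall>x\<in>S. \<forall>I J L.
     partial_coord (\<lambda>y. w y J L) x I + partial_coord (\<lambda>y. w y L I) x J
       + partial_coord (\<lambda>y. w y I J) x L = 0)"

text \<open>The 2-form Xi on TU: Xi(Y,Z)(w) = g(B(w, T tau Y), T tau Z).
In coordinates, with B q e a c = B^c_{ea}(q) and g q b c = g_{bc}(q),
its coefficient on dq^a wedge dq^b is sum_{e,c} qdot^e B^c_{ea} g_{bc};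
all components involving dqdot vanish.\<close>
definition Xi_coeff ::
  "(real^'n \<Rightarrow> 'n \<Rightarrow> 'n \<Rightarrow> real) \<Rightarrow> (real^'n \<Rightarrow> 'n \<Rightarrow> 'n \<Rightarrow> 'n \<Rightarrow> real)
   \<Rightarrow> (real^'n) \<times> (real^'n) \<Rightarrow> ('n::finite) + 'n \<Rightarrow> 'n + 'n \<Rightarrow> real" where
  "Xi_coeff g B x I J = (case (I, J) of
      (Inl a, Inl b) \<Rightarrow> (\<Sum>e\<in>UNIV. \<Sum>c\<in>UNIV. snd x $ e * B (fst x) e a c * g (fst x) b c)
    | _ \<Rightarrow> 0)"

end

theory Submission
  imports Defs
begin

text \<open>The only nonvanishing coefficients of \<open>\<Xi>\<close> are \<open>\<Xi>\<^sub>a\<^sub>b = \<Sum>\<^sub>e v\<^sup>e K\<^sub>e\<^sub>a\<^sub>b\<close> on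
  \<open>dq\<^sup>a \<wedge> dq\<^sup>b\<close>, where \<open>K\<^sub>e\<^sub>a\<^sub>b = \<Sum>\<^sub>c B\<^sup>c\<^sub>e\<^sub>a g\<^sub>b\<^sub>c\<close>; they are linear in the fibre
  coordinate \<open>v\<close>. In the component of \<open>d\<Xi>\<close> along \<open>dv\<^sup>e \<wedge> dq\<^sup>a \<wedge> dq\<^sup>b\<close> the two terms
  containing a mixed coefficient vanish, leaving \<open>\<partial>\<Xi>\<^sub>a\<^sub>b/\<partial>v\<^sup>e = K\<^sub>e\<^sub>a\<^sub>b\<close>.
  So closedness forces \<open>K = 0\<close>, hence \<open>\<Xi> = 0\<close>; conversely a form vanishing on an open
  set is closed there.\<close>

definition K_coeff ::
  "(real^'n \<Rightarrow> 'n \<Rightarrow> 'n \<Rightarrow> real) \<Rightarrow> (real^'n \<Rightarrow> 'n \<Rightarrow> 'n \<Rightarrow> 'n \<Rightarrow> real)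
   \<Rightarrow> real^'n \<Rightarrow> 'n \<Rightarrow> 'n \<Rightarrow> 'n \<Rightarrow> real" where
  "K_coeff g B q e a b = (\<Sum>c\<in>UNIV. B q e a c * g q b c)"

lemma partial_coord_const [simp]: "partial_coord (\<lambda>y. c) x I = 0"
  by (simp add: partial_coord_def)

lemma partial_coord_eq_0_if_vanishing_on_open:
  assumes "open S" "x \<in> S" and vanish: "\<And>y. y \<in> S \<Longrightarrow> f y = 0"
  shows "partial_coord f x I = 0"
proof -
  have "continuous_on UNIV (\<lambda>t::real. x + t *\<^sub>R coord_vec I)"
    by (intro continuous_intros)
  then have "open ((\<lambda>t. x + t *\<^sub>R coord_vec I) -` S)"
    using open_vimage[OF \<open>open S\<close>] by blast
  then have "eventually (\<lambda>t. x + t *\<^sub>R coord_vec I \<in> S) (nhds 0)"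
    using eventually_nhds_in_open[of _ 0] \<open>x \<in> S\<close> by fastforce
  then have "eventually (\<lambda>t. f (x + t *\<^sub>R coord_vec I) = 0) (nhds 0)"
    by (rule eventually_mono) (rule vanish)
  then have "deriv (\<lambda>t. f (x + t *\<^sub>R coord_vec I)) 0 = deriv (\<lambda>t. 0) 0"
    by (rule deriv_cong_ev) simp
  then show ?thesis
    by (simp add: partial_coord_def)
qed

lemma closed_2form_if_vanishing_on_open:
  assumes "open S" and "\<forall>x\<in>S. \<forall>I J. w x I J = 0"
  shows "closed_2form S w"
  using partial_coord_eq_0_if_vanishing_on_open[OF \<open>open S\<close>] assms(2)
  by (simp add: closed_2form_def)

lemma partial_coord_fibre_linear:
  "partial_coord (\<lambda>y. \<Sum>e\<in>UNIV. snd y $ e * h (fst y) e) x (Inr d) = h (fst x) d"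
proof -
  have "((\<lambda>t. \<Sum>e\<in>UNIV. (snd x $ e + t * axis d 1 $ e) * h (fst x) e)
          has_field_derivative (\<Sum>e\<in>UNIV. axis d 1 $ e * h (fst x) e)) (at 0)"
    by (auto intro!: derivative_eq_intros)
  moreover have "(\<Sum>e\<in>UNIV. axis d 1 $ e * h (fst x) e) = h (fst x) d"
    by (simp add: axis_def mult_delta_left)
  ultimately show ?thesis
    unfolding partial_coord_def by (simp add: coord_vec_def DERIV_imp_deriv)
qed

lemma Xi_coeff_Inl_Inl:
  "Xi_coeff g B y (Inl a) (Inl b) = (\<Sum>e\<in>UNIV. snd y $ e * K_coeff g B (fst y) e a b)"
  by (simp add: Xi_coeff_def K_coeff_def sum_distrib_left mult.assoc)

lemma Xi_coeff_Inl_Inr [simp]: "Xi_coeff g B y (Inl a) (Inr b) = 0"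
  by (simp add: Xi_coeff_def)

lemma Xi_coeff_Inr [simp]: "Xi_coeff g B y (Inr a) J = 0"
  by (simp add: Xi_coeff_def split: sum.split)

lemma K_coeff_eq_0_if_closed_Xi:
  assumes "closed_2form (U \<times> UNIV) (Xi_coeff g B)" and "q \<in> U"
  shows "K_coeff g B q e a b = 0"
proof -
  have "partial_coord (\<lambda>y. Xi_coeff g B y (Inl a) (Inl b)) (q, 0) (Inr e)
      + partial_coord (\<lambda>y. Xi_coeff g B y (Inl b) (Inr e)) (q, 0) (Inl a)
      + partial_coord (\<lambda>y. Xi_coeff g B y (Inr e) (Inl a)) (q, 0) (Inl b) = 0"
    using assms unfolding closed_2form_def by blast
  then show ?thesis
    by (simp add: Xi_coeff_Inl_Inl partial_coord_fibre_linear[of "\<lambda>q e. K_coeff g B q e a b"])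
qed

lemma Xi_coeff_eq_0_if_K_coeff_eq_0:
  assumes "\<And>e a b. K_coeff g B (fst y) e a b = 0"
  shows "Xi_coeff g B y I J = 0"
  using assms by (cases I; cases J) (simp_all add: Xi_coeff_Inl_Inl)

theorem proposition7p2:
  fixes U :: "(real^'n::finite) set"
    and g :: "real^'n \<Rightarrow> 'n \<Rightarrow> 'n \<Rightarrow> real"
    and B :: "real^'n \<Rightarrow> 'n \<Rightarrow> 'n \<Rightarrow> 'n \<Rightarrow> real"
  assumes U_open: "open U"
    and g_smooth: "\<And>b c. \<forall>q\<in>U. (\<lambda>q. g q b c) differentiable (at q)"
    and B_smooth: "\<And>e a c. \<forall>q\<in>U. (\<lambda>q. B q e a c) differentiable (at q)"
    and g_sym: "\<And>q b c. q \<in> U \<Longrightarrow> g q b c = g q c b"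
    and g_pos: "\<And>q (v::real^'n). q \<in> U \<Longrightarrow> v \<noteq> 0 \<Longrightarrow> (\<Sum>b\<in>UNIV. \<Sum>c\<in>UNIV. v $ b * g q b c * v $ c) > 0"
    and K_antisym: "\<And>q e a b. q \<in> U \<Longrightarrow>
        (\<Sum>c\<in>UNIV. B q e a c * g q b c) = - (\<Sum>c\<in>UNIV. B q e b c * g q a c)"
  shows "closed_2form (U \<times> UNIV) (Xi_coeff g B) \<longleftrightarrow>
         (\<forall>x\<in>U \<times> UNIV. \<forall>I J. Xi_coeff g B x I J = 0)"
  \<comment> \<open>Only openness of \<open>U\<close> is needed: \<open>closed_2form\<close> works with the full coefficient
    matrix, so no antisymmetrisation (and hence no use of \<open>K_antisym\<close>) is involved.\<close>
proof
  assume "closed_2form (U \<times> UNIV) (Xi_coeff g B)"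
  then show "\<forall>x\<in>U \<times> UNIV. \<forall>I J. Xi_coeff g B x I J = 0"
    using K_coeff_eq_0_if_closed_Xi Xi_coeff_eq_0_if_K_coeff_eq_0 by (metis mem_Times_iff)
next
  assume "\<forall>x\<in>U \<times> UNIV. \<forall>I J. Xi_coeff g B x I J = 0"
  then show "closed_2form (U \<times> UNIV) (Xi_coeff g B)"
    using U_open by (intro closed_2form_if_vanishing_on_open) (auto intro: open_Times)
qed

end
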